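(* For any $X$-free ordered graph $(H,\prec)$, the graph $H$ contains no subdivision of $B_4$ as an induced subgraph.
   Context: An ordered graph is a pair $(H,\prec)$ with $H$ a finite graph and $\prec$ a linear order on $V(H)$. $X$ denotes the ordered graph on vertices $a\prec b\prec c\prec d$ with edge set exactly $\{ac,bd\}$; an ordered graph is $X$-free if no four of its vertices induce (with the restricted order) a copy of $X$. $B_4$ is the graph on vertices $s,t,x_1,x_2,x_3,y_1,y_2,y_3,z_1,z_2,z_3$ formed by the three internally disjoint paths $s x_1 x_2 x_3 t$, $s y_1 y_2 y_3 t$, $s z_1 z_2 z_3 t$ (each with $4$ edges) and no other edges. A subdivision of a graph $F$ is a graph obtained from $F$ by replacing edges of $F$ with internally disjoint paths between their ends. *)

theory Defs
  imports Main
begin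

definition ordered_graph :: "'a set \<Rightarrow> ('a \<Rightarrow> 'a \<Rightarrow> bool) \<Rightarrow> ('a \<Rightarrow> 'a \<Rightarrow> bool) \<Rightarrow> bool" where
  "ordered_graph V E lt \<longleftrightarrow>
     finite V \<and> (\<forall>x y. E x y \<longrightarrow> x \<in> V \<and> y \<in> V) \<and> (\<forall>x y. E x y \<longrightarrow> E y x) \<and> (\<forall>x. \<not> E x x)
     \<and> (\<forall>x\<in>V. \<not> lt x x)
     \<and> (\<forall>x\<in>V. \<forall>y\<in>V. \<forall>z\<in>V. lt x y \<longrightarrow> lt y z \<longrightarrow> lt x z)
     \<and> (\<forall>x\<in>V. \<forall>y\<in>V. x \<noteq> y \<longrightarrow> lt x y \<or> lt y x)"

definition X_free :: "'a set \<Rightarrow> ('a \<Rightarrow> 'a \<Rightarrow> bool) \<Rightarrow> ('a \<Rightarrow> 'a \<Rightarrow> bool) \<Rightarrow> bool" where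
  "X_free V E lt \<longleftrightarrow>
     \<not> (\<exists>a b c d. a \<in> V \<and> b \<in> V \<and> c \<in> V \<and> d \<in> V \<and> lt a b \<and> lt b c \<and> lt c d \<and>
          E a c \<and> E b d \<and> \<not> E a b \<and> \<not> E a d \<and> \<not> E b c \<and> \<not> E c d)"

definition path_adj :: "'a list \<Rightarrow> 'a \<Rightarrow> 'a \<Rightarrow> bool" where
  "path_adj p x y \<longleftrightarrow>
     (\<exists>i. Suc i < length p \<and> ((p ! i = x \<and> p ! Suc i = y) \<or> (p ! i = y \<and> p ! Suc i = x)))"

text \<open>The graph (V,E) contains, as an induced subgraph, a subdivision of the graph F with
  vertex set VF and edge set EF (each undirected edge of F listed once as an ordered pair):
  branch vertices phi v, and for every edge (u,v) of F a path P (u,v) in the host graph from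
  phi u to phi v, with internal vertices avoiding branch vertices and pairwise disjoint
  between different edges; the subgraph induced on all these vertices has exactly the path
  edges.\<close>
definition induced_subdivision ::
  "'a set \<Rightarrow> ('a \<Rightarrow> 'a \<Rightarrow> bool) \<Rightarrow> 'b set \<Rightarrow> ('b \<times> 'b) set \<Rightarrow> bool" where
  "induced_subdivision V E VF EF \<longleftrightarrow>
     (\<exists>(phi :: 'b \<Rightarrow> 'a) (P :: 'b \<times> 'b \<Rightarrow> 'a list).
        inj_on phi VF \<and> phi ` VF \<subseteq> V \<and>
        (\<forall>e\<in>EF. distinct (P e) \<and> length (P e) \<ge> 2 \<and> set (P e) \<subseteq> V \<and>
                 hd (P e) = phi (fst e) \<and> last (P e) = phi (snd e) \<and>
                 (\<forall>i. Suc i < length (P e) \<longrightarrow> E (P e ! i) (P e ! Suc i)) \<and>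
                 set (butlast (tl (P e))) \<inter> phi ` VF = {}) \<and>
        (\<forall>e\<in>EF. \<forall>e'\<in>EF. e \<noteq> e' \<longrightarrow> set (butlast (tl (P e))) \<inter> set (butlast (tl (P e'))) = {}) \<and>
        (let S = phi ` VF \<union> (\<Union>e\<in>EF. set (P e)) in
          \<forall>x\<in>S. \<forall>y\<in>S. E x y \<longleftrightarrow> (\<exists>e\<in>EF. path_adj (P e) x y)))"

text \<open>B_4: s = 0, t = 1; paths s x1 x2 x3 t = 0-2-3-4-1, s y1 y2 y3 t = 0-5-6-7-1,
  s z1 z2 z3 t = 0-8-9-10-1.\<close>
definition B4_vertices :: "nat set" where
  "B4_vertices = {0..10}"

definition B4_edges :: "(nat \<times> nat) set" where
  "B4_edges = {(0,2),(2,3),(3,4),(4,1), (0,5),(5,6),(6,7),(7,1), (0,8),(8,9),(9,10),(10,1)}"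

end

theory Submission
  imports Defs
begin

text \<open>
  An induced subdivision of \<open>B\<^sub>4\<close> is an induced theta graph: three internally disjoint
  paths from \<open>s\<close> to \<open>t\<close>, each with at least four edges, and no other edges among their
  vertices. Call a vertex far from an edge \<open>ab\<close> if it is neither equal nor adjacent to
  \<open>a\<close> or \<open>b\<close>. If two adjacent vertices far from \<open>ab\<close> lay on different sides of the
  interval between \<open>a\<close> and \<open>b\<close>, the four vertices would induce an \<open>X\<close>. The vertices far
  from an edge are connected (through \<open>s\<close> or through \<open>t\<close>), so either all of them lie
  inside the interval (the edge is inner) or none does (it is outer). Two inner edges far
  from each other would each lie inside the interval of the other; hence inner edges on
  different paths are both at the \<open>s\<close>-end or both at the \<open>t\<close>-end. Consequently either two
  paths consist of outer edges only, or, up to reversing the paths, every edge away from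
  \<open>s\<close> is outer. Both are impossible, because a path of outer edges stays on one side of
  every vertex far from all of its edges.
\<close>

lemma path_adj_Nil: "\<not> path_adj [] x y"
  by (simp add: path_adj_def)

lemma path_adj_Cons:
  "path_adj (a # xs) x y \<longleftrightarrow>
     xs \<noteq> [] \<and> (a = x \<and> hd xs = y \<or> a = y \<and> hd xs = x) \<or> path_adj xs x y"
proof -
  have ex_nat: "(\<exists>i. R i) \<longleftrightarrow> R 0 \<or> (\<exists>i. R (Suc i))" for R :: "nat \<Rightarrow> bool"
    by (metis not0_implies_Suc)
  show ?thesis
    unfolding path_adj_def ex_nat[where R = "\<lambda>i. Suc i < length (a # xs) \<and> _ i"]
    by (cases xs) auto
qed

lemma path_adj_append:
  "path_adj (xs @ ys) x y \<longleftrightarrow> path_adj xs x y \<or> path_adj ys x y \<or>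
     xs \<noteq> [] \<and> ys \<noteq> [] \<and> (last xs = x \<and> hd ys = y \<or> last xs = y \<and> hd ys = x)"
  by (induction xs) (auto simp: path_adj_Cons path_adj_Nil)

lemma path_adj_commute: "path_adj p x y \<longleftrightarrow> path_adj p y x"
  unfolding path_adj_def by blast

lemma path_adj_rev [simp]: "path_adj (rev p) x y \<longleftrightarrow> path_adj p x y"
  by (induction p) (auto simp: path_adj_append path_adj_Cons path_adj_Nil last_rev hd_rev)

abbreviation internal_vertices :: "'a list \<Rightarrow> 'a set" where
  "internal_vertices p \<equiv> set (butlast (tl p))"

lemma internal_vertices_subset: "internal_vertices p \<subseteq> set p"
  by (cases p) (auto dest: in_set_butlastD)

lemma list_eq_hd_internal_last:
  assumes "2 \<le> length p"
  shows "p = hd p # butlast (tl p) @ [last p]"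
  using assms by (cases p) (auto simp: last_tl)

fun subdivided_path :: "('b \<Rightarrow> 'a) \<Rightarrow> ('b \<times> 'b \<Rightarrow> 'a list) \<Rightarrow> 'b list \<Rightarrow> 'a list" where
  "subdivided_path phi P [] = []"
| "subdivided_path phi P [a] = [phi a]"
| "subdivided_path phi P (a # b # bs) = butlast (P (a, b)) @ subdivided_path phi P (b # bs)"

lemma subdivided_path_eq_Nil_iff [simp]: "subdivided_path phi P bs = [] \<longleftrightarrow> bs = []"
  by (induction phi P bs rule: subdivided_path.induct) auto

locale subdivision_paths =
  fixes phi :: "'b \<Rightarrow> 'a" and P :: "'b \<times> 'b \<Rightarrow> 'a list"
    and VF :: "'b set" and EF :: "('b \<times> 'b) set"
  assumes inj_phi: "inj_on phi VF"
    and subdivision_path: "e \<in> EF \<Longrightarrow>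
      distinct (P e) \<and> 2 \<le> length (P e) \<and> hd (P e) = phi (fst e) \<and> last (P e) = phi (snd e)"
    and internal_not_branch: "e \<in> EF \<Longrightarrow> internal_vertices (P e) \<inter> phi ` VF = {}"
    and internal_disjoint:
      "e \<in> EF \<Longrightarrow> e' \<in> EF \<Longrightarrow> e \<noteq> e' \<Longrightarrow> internal_vertices (P e) \<inter> internal_vertices (P e') = {}"
begin

lemma butlast_subdivision_path:
  assumes "(a, b) \<in> EF"
  shows "butlast (P (a, b)) = phi a # butlast (tl (P (a, b)))"
proof -
  have "P (a, b) = phi a # butlast (tl (P (a, b))) @ [phi b]"
    using subdivision_path[OF assms] list_eq_hd_internal_last[of "P (a, b)"] by simp
  then show ?thesis
    by (metis butlast_snoc append_Cons)
qed

lemma subdivided_path_ends: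
  assumes "bs \<noteq> []" "set (zip bs (tl bs)) \<subseteq> EF"
  shows "hd (subdivided_path phi P bs) = phi (hd bs) \<and>
    last (subdivided_path phi P bs) = phi (last bs)"
  using assms
proof (induction bs rule: induct_list012)
  case (3 a b bs)
  then show ?case
    using butlast_subdivision_path[of a b] by auto
qed auto

lemma set_subdivided_path:
  assumes "set (zip bs (tl bs)) \<subseteq> EF"
  shows "set (subdivided_path phi P bs) =
    phi ` set bs \<union> (\<Union>e\<in>set (zip bs (tl bs)). internal_vertices (P e))"
  using assms
proof (induction bs rule: induct_list012)
  case (3 a b bs)
  then show ?case
    using butlast_subdivision_path[of a b] by auto
qed auto

lemma length_subdivided_path:
  assumes "set (zip bs (tl bs)) \<subseteq> EF"
  shows "length bs \<le> length (subdivided_path phi P bs)"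
  using assms
proof (induction bs rule: induct_list012)
  case (3 a b bs)
  then show ?case
    using butlast_subdivision_path[of a b] by auto
qed auto

lemma path_adj_subdivided_path:
  assumes "set (zip bs (tl bs)) \<subseteq> EF"
  shows "path_adj (subdivided_path phi P bs) x y \<longleftrightarrow>
    (\<exists>e\<in>set (zip bs (tl bs)). path_adj (P e) x y)"
  using assms
proof (induction bs rule: induct_list012)
  case (3 a b bs)
  have ab: "(a, b) \<in> EF" using "3.prems" by simp
  define q where "q = butlast (P (a, b))"
  have q: "P (a, b) = q @ [phi b]" "q \<noteq> []"
    using subdivision_path[OF ab] butlast_subdivision_path[OF ab] append_butlast_last_id[of "P (a, b)"]
    unfolding q_def by force+
  have "hd (subdivided_path phi P (b # bs)) = phi b"
    using subdivided_path_ends[of "b # bs"] "3.prems" by simp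
  then show ?case
    using "3" q by (auto simp: q_def[symmetric] path_adj_append path_adj_Cons path_adj_Nil)
qed (auto simp: path_adj_Cons path_adj_Nil)

lemma distinct_subdivided_path:
  assumes "distinct bs" "set bs \<subseteq> VF" "set (zip bs (tl bs)) \<subseteq> EF"
  shows "distinct (subdivided_path phi P bs)"
  using assms
proof (induction bs rule: induct_list012)
  case (3 a b bs)
  have ab: "(a, b) \<in> EF" and a: "a \<in> VF" "a \<notin> set (b # bs)" and bs: "set (b # bs) \<subseteq> VF"
    and edges: "set (zip (b # bs) bs) \<subseteq> EF"
    using "3.prems" by auto
  have "distinct (phi a # butlast (tl (P (a, b))))"
    using distinct_butlast[of "P (a, b)"] subdivision_path[OF ab] butlast_subdivision_path[OF ab] by simp
  moreover have "distinct (subdivided_path phi P (b # bs))"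
    using "3.IH"(2) "3.prems" by simp
  moreover have "phi a \<notin> phi ` set (b # bs)"
    using a bs inj_on_image_mem_iff[OF inj_phi] by blast
  moreover have "phi a \<notin> internal_vertices (P e)" if "e \<in> EF" for e
    using internal_not_branch[OF that] a(1) by blast
  moreover have "internal_vertices (P (a, b)) \<inter> phi ` set (b # bs) = {}"
    using internal_not_branch[OF ab] bs by blast
  moreover have "internal_vertices (P (a, b)) \<inter> internal_vertices (P e) = {}"
    if "e \<in> set (zip (b # bs) bs)" for e
  proof -
    have "e \<noteq> (a, b)"
      using that a(2) by (auto dest: set_zip_leftD)
    then show ?thesis
      using internal_disjoint[OF ab, of e] that edges by auto
  qed
  ultimately show ?case
    using edges butlast_subdivision_path[OF ab] by (simp add: set_subdivided_path) blast
qed auto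

lemma subdivided_paths_inter:
  assumes "set bs \<subseteq> VF" "set cs \<subseteq> VF"
    and "set (zip bs (tl bs)) \<subseteq> EF" "set (zip cs (tl cs)) \<subseteq> EF"
    and "set (zip bs (tl bs)) \<inter> set (zip cs (tl cs)) = {}"
  shows "set (subdivided_path phi P bs) \<inter> set (subdivided_path phi P cs) \<subseteq>
    phi ` (set bs \<inter> set cs)"
proof -
  define IB where "IB = (\<Union>e\<in>set (zip bs (tl bs)). internal_vertices (P e))"
  define IC where "IC = (\<Union>e\<in>set (zip cs (tl cs)). internal_vertices (P e))"
  have IB: "IB \<inter> phi ` VF = {}" and IC: "IC \<inter> phi ` VF = {}"
    using internal_not_branch assms(3,4) unfolding IB_def IC_def by blast+
  have IBC: "IB \<inter> IC = {}"
    using internal_disjoint assms(3-5) unfolding IB_def IC_def by blast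
  have BC: "phi ` set bs \<inter> phi ` set cs = phi ` (set bs \<inter> set cs)"
    using inj_on_image_Int[OF inj_phi assms(1,2)] by simp
  have B: "phi ` set bs \<subseteq> phi ` VF" and C: "phi ` set cs \<subseteq> phi ` VF"
    using assms(1,2) by (simp_all add: image_mono)
  have sets: "set (subdivided_path phi P bs) = phi ` set bs \<union> IB"
    "set (subdivided_path phi P cs) = phi ` set cs \<union> IC"
    unfolding IB_def IC_def by (simp_all add: set_subdivided_path assms(3,4))
  have "(X \<union> IB) \<inter> (Y \<union> IC) \<subseteq> X \<inter> Y" if "X \<subseteq> phi ` VF" "Y \<subseteq> phi ` VF" for X Y
    using that IB IC IBC by blast
  from this[OF B C] show ?thesis
    unfolding sets BC .
qed

end

locale induced_theta =
  fixes E :: "'a \<Rightarrow> 'a \<Rightarrow> bool" and Q :: "nat \<Rightarrow> 'a list" and s t :: 'a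
  assumes distinct_path: "j < 3 \<Longrightarrow> distinct (Q j)"
    and long_path: "j < 3 \<Longrightarrow> 5 \<le> length (Q j)"
    and hd_path: "j < 3 \<Longrightarrow> hd (Q j) = s"
    and last_path: "j < 3 \<Longrightarrow> last (Q j) = t"
    and paths_meet_at_ends:
      "j < 3 \<Longrightarrow> j' < 3 \<Longrightarrow> j \<noteq> j' \<Longrightarrow> set (Q j) \<inter> set (Q j') \<subseteq> {s, t}"
    and induced: "x \<in> (\<Union>j<3. set (Q j)) \<Longrightarrow> y \<in> (\<Union>j<3. set (Q j)) \<Longrightarrow>
      E x y \<longleftrightarrow> (\<exists>j<3. path_adj (Q j) x y)"
begin

definition vertices :: "'a set" where
  "vertices = (\<Union>j<3. set (Q j))"

definition len :: "nat \<Rightarrow> nat" where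
  "len j = length (Q j) - 1"

definition v :: "nat \<Rightarrow> nat \<Rightarrow> 'a" where
  "v j i = Q j ! i"

lemma len_ge: "j < 3 \<Longrightarrow> 4 \<le> len j"
  using long_path by (fastforce simp: len_def)

lemma length_path: "j < 3 \<Longrightarrow> length (Q j) = Suc (len j)"
  using long_path by (fastforce simp: len_def)

lemma v_0: "j < 3 \<Longrightarrow> v j 0 = s"
  using hd_path long_path hd_conv_nth[of "Q j"] by (fastforce simp: v_def)

lemma v_len: "j < 3 \<Longrightarrow> v j (len j) = t"
  using last_path long_path last_conv_nth[of "Q j"] by (fastforce simp: v_def len_def)

lemma vertices_iff: "x \<in> vertices \<longleftrightarrow> (\<exists>j<3. \<exists>i\<le>len j. x = v j i)"
  unfolding vertices_def v_def by (auto simp: in_set_conv_nth length_path less_Suc_eq_le)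

lemma v_in_vertices [simp]: "j < 3 \<Longrightarrow> i \<le> len j \<Longrightarrow> v j i \<in> vertices"
  using vertices_iff by blast

lemma s_in_vertices [simp]: "s \<in> vertices" and t_in_vertices [simp]: "t \<in> vertices"
  using v_in_vertices[of 0 0] v_in_vertices[of 0 "len 0"] v_0[of 0] v_len[of 0] by simp_all

lemma v_inj:
  assumes "j < 3" "i \<le> len j" "i' \<le> len j"
  shows "v j i = v j i' \<longleftrightarrow> i = i'"
  using assms distinct_path length_path by (simp add: v_def nth_eq_iff_index_eq)

lemma v_eq_s_iff: "j < 3 \<Longrightarrow> i \<le> len j \<Longrightarrow> v j i = s \<longleftrightarrow> i = 0"
  using v_inj[of j i 0] v_0 by simp

lemma v_eq_t_iff: "j < 3 \<Longrightarrow> i \<le> len j \<Longrightarrow> v j i = t \<longleftrightarrow> i = len j"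
  using v_inj[of j i "len j"] v_len by simp

lemma v_eq_iff:
  assumes "j < 3" "j' < 3" "i \<le> len j" "i' \<le> len j'"
  shows "v j i = v j' i' \<longleftrightarrow> j = j' \<and> i = i' \<or> i = 0 \<and> i' = 0 \<or> i = len j \<and> i' = len j'"
proof (cases "j = j'")
  case False
  have "v j i \<in> set (Q j)" "v j' i' \<in> set (Q j')"
    using assms length_path by (simp_all add: v_def)
  then have "v j i = v j' i' \<longleftrightarrow> v j i = s \<and> v j' i' = s \<or> v j i = t \<and> v j' i' = t"
    using paths_meet_at_ends[OF assms(1,2) False] by auto
  then show ?thesis
    using False assms by (simp add: v_eq_s_iff v_eq_t_iff)
qed (use assms v_inj in auto)

lemma path_adj_iff:
  "j < 3 \<Longrightarrow> path_adj (Q j) x y \<longleftrightarrow>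
     (\<exists>p<len j. x = v j p \<and> y = v j (Suc p) \<or> x = v j (Suc p) \<and> y = v j p)"
  by (auto simp: path_adj_def v_def length_path)

lemma adj_v_iff:
  assumes ji: "j < 3" "i \<le> len j" and ji': "j' < 3" "i' \<le> len j'"
  shows "E (v j i) (v j' i') \<longleftrightarrow>
    j = j' \<and> (i' = Suc i \<or> i = Suc i') \<or> i = 0 \<and> i' = 1 \<or> i = 1 \<and> i' = 0 \<or>
    i = len j \<and> Suc i' = len j' \<or> Suc i = len j \<and> i' = len j'" (is "_ \<longleftrightarrow> ?adj")
proof -
  have "E (v j i) (v j' i') \<longleftrightarrow> (\<exists>j''<3. \<exists>p<len j''.
      v j i = v j'' p \<and> v j' i' = v j'' (Suc p) \<or> v j i = v j'' (Suc p) \<and> v j' i' = v j'' p)"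
    using induced[of "v j i" "v j' i'"] ji ji'
    by (simp add: path_adj_iff vertices_def[symmetric] cong: conj_cong)
  also have "\<dots> \<longleftrightarrow> ?adj"
  proof
    assume "\<exists>j''<3. \<exists>p<len j''.
      v j i = v j'' p \<and> v j' i' = v j'' (Suc p) \<or> v j i = v j'' (Suc p) \<and> v j' i' = v j'' p"
    then obtain j'' p where p: "j'' < 3" "p < len j''"
      "v j i = v j'' p \<and> v j' i' = v j'' (Suc p) \<or> v j i = v j'' (Suc p) \<and> v j' i' = v j'' p"
      by blast
    note eqs = v_eq_iff[OF ji(1) p(1) ji(2)] v_eq_iff[OF ji'(1) p(1) ji'(2)]
    from p(3) show ?adj
    proof
      assume "v j i = v j'' p \<and> v j' i' = v j'' (Suc p)"
      then have "j = j'' \<and> i = p \<or> i = 0 \<and> p = 0 \<or> i = len j \<and> p = len j''"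
        "j' = j'' \<and> i' = Suc p \<or> i' = 0 \<and> Suc p = 0 \<or> i' = len j' \<and> Suc p = len j''"
        using eqs p(2) by auto
      then show ?adj
        using p(2) len_ge[OF p(1)] by auto
    next
      assume "v j i = v j'' (Suc p) \<and> v j' i' = v j'' p"
      then have "j = j'' \<and> i = Suc p \<or> i = 0 \<and> Suc p = 0 \<or> i = len j \<and> Suc p = len j''"
        "j' = j'' \<and> i' = p \<or> i' = 0 \<and> p = 0 \<or> i' = len j' \<and> p = len j''"
        using eqs p(2) by auto
      then show ?adj
        using p(2) len_ge[OF p(1)] by auto
    qed
  next
    note ends = v_0[OF ji(1)] v_0[OF ji'(1)] v_len[OF ji(1)] v_len[OF ji'(1)]
    assume ?adj
    then show "\<exists>j''<3. \<exists>p<len j''.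
      v j i = v j'' p \<and> v j' i' = v j'' (Suc p) \<or> v j i = v j'' (Suc p) \<and> v j' i' = v j'' p"
    proof (elim disjE conjE)
      assume "j = j'" "i' = Suc i"
      then show ?thesis
        using ji' by (intro exI[of _ j] conjI exI[of _ i]) auto
    next
      assume "j = j'" "i = Suc i'"
      then show ?thesis
        using ji by (intro exI[of _ j] conjI exI[of _ i']) auto
    next
      assume "i = 0" "i' = 1"
      then show ?thesis
        using ends ji' len_ge[of j'] by (intro exI[of _ j'] conjI exI[of _ 0]) auto
    next
      assume "i = 1" "i' = 0"
      then show ?thesis
        using ends ji len_ge[of j] by (intro exI[of _ j] conjI exI[of _ 0]) auto
    next
      assume "i = len j" "Suc i' = len j'"
      then show ?thesis
        using ends ji' by (intro exI[of _ j'] conjI exI[of _ i']) auto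
    next
      assume "Suc i = len j" "i' = len j'"
      then show ?thesis
        using ends ji by (intro exI[of _ j] conjI exI[of _ i]) auto
    qed
  qed
  finally show ?thesis .
qed

lemma adj_commute: "x \<in> vertices \<Longrightarrow> y \<in> vertices \<Longrightarrow> E x y \<longleftrightarrow> E y x"
  using induced[of x y] induced[of y x] path_adj_commute[of _ x y] unfolding vertices_def
  by simp

definition far :: "'a \<Rightarrow> 'a \<Rightarrow> 'a \<Rightarrow> bool" where
  "far u a b \<longleftrightarrow> u \<noteq> a \<and> u \<noteq> b \<and> \<not> E u a \<and> \<not> E u b"

lemma far_commute: "far u a b \<longleftrightarrow> far u b a"
  unfolding far_def by blast

lemma far_s_iff:
  assumes "j < 3" "i < len j"
  shows "far s (v j i) (v j (Suc i)) \<longleftrightarrow> 2 \<le> i"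
proof -
  have "far (v j 0) (v j i) (v j (Suc i)) \<longleftrightarrow> 2 \<le> i"
    using assms len_ge[OF assms(1)] by (simp add: far_def v_eq_iff adj_v_iff; arith)
  then show ?thesis
    using v_0[OF assms(1)] by simp
qed

lemma far_t_iff:
  assumes "j < 3" "i < len j"
  shows "far t (v j i) (v j (Suc i)) \<longleftrightarrow> i + 3 \<le> len j"
proof -
  have "far (v j (len j)) (v j i) (v j (Suc i)) \<longleftrightarrow> i + 3 \<le> len j"
    using assms len_ge[OF assms(1)] by (simp add: far_def v_eq_iff adj_v_iff; arith)
  then show ?thesis
    using v_len[OF assms(1)] by simp
qed

lemma far_same_path_iff:
  assumes "j < 3" "i < len j" "0 < y" "y < len j"
  shows "far (v j y) (v j i) (v j (Suc i)) \<longleftrightarrow> y + 1 < i \<or> i + 2 < y"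
  using assms len_ge[OF assms(1)] by (simp add: far_def v_eq_iff adj_v_iff; arith)

lemma far_other_path_iff:
  assumes "j < 3" "i < len j" "j' < 3" "j' \<noteq> j" "0 < y" "y < len j'"
  shows "far (v j' y) (v j i) (v j (Suc i)) \<longleftrightarrow>
    \<not> (y = 1 \<and> i = 0) \<and> \<not> (Suc y = len j' \<and> Suc i = len j)"
  using assms len_ge[OF assms(1)] len_ge[OF assms(3)]
  by (simp add: far_def v_eq_iff adj_v_iff; arith)

lemma far_v_iff:
  assumes j: "j < 3" "i < len j" and j': "j' < 3" "y \<le> len j'"
  shows "far (v j' y) (v j i) (v j (Suc i)) \<longleftrightarrow>
    (if y = 0 then 2 \<le> i
     else if y = len j' then i + 3 \<le> len j
     else if j' = j then y + 1 < i \<or> i + 2 < y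
     else \<not> (y = 1 \<and> i = 0) \<and> \<not> (Suc y = len j' \<and> Suc i = len j))"
  using far_s_iff[OF j] far_t_iff[OF j] far_same_path_iff[OF j] far_other_path_iff[OF j j'(1)]
    v_0[OF j'(1)] v_len[OF j'(1)] j'(2) by auto

end

definition between :: "('a \<Rightarrow> 'b::linorder) \<Rightarrow> 'a \<Rightarrow> 'a \<Rightarrow> 'a \<Rightarrow> bool" where
  "between r a u b \<longleftrightarrow> r a < r u \<and> r u < r b \<or> r b < r u \<and> r u < r a"

lemma between_commute: "between r a u b \<longleftrightarrow> between r b u a"
  unfolding between_def by auto

lemma between_among_three:
  fixes f :: "nat \<Rightarrow> 'a" and r :: "'a \<Rightarrow> 'b::linorder"
  assumes "\<And>j j'. j < 3 \<Longrightarrow> j' < 3 \<Longrightarrow> j \<noteq> j' \<Longrightarrow> r (f j) \<noteq> r (f j')"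
    and "\<And>j. j < 3 \<Longrightarrow> r (f j) \<noteq> r t"
  shows "\<exists>j1<3. \<exists>j2<3. j1 \<noteq> j2 \<and> between r (f j2) (f j1) t"
proof -
  obtain j1 j2 where j: "j1 < 3" "j2 < 3" "j1 \<noteq> j2" and side: "r (f j1) < r t \<longleftrightarrow> r (f j2) < r t"
  proof (cases "r (f 0) < r t \<longleftrightarrow> r (f 1) < r t")
    case True
    then show ?thesis using that[of 0 1] by simp
  next
    case False
    then show ?thesis
      using that[of 0 2] that[of 1 2] by (cases "r (f 0) < r t"; cases "r (f 2) < r t") simp_all
  qed
  have "between r (f j2) (f j1) t \<or> between r (f j1) (f j2) t"
    using side assms(1)[OF j] assms(2)[OF j(1)] assms(2)[OF j(2)]
    unfolding between_def by (cases "r (f j1) < r (f j2)") auto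
  then show ?thesis
    using j by blast
qed

locale X_free_theta = induced_theta E Q s t
  for E :: "'a \<Rightarrow> 'a \<Rightarrow> bool" and Q :: "nat \<Rightarrow> 'a list" and s t :: 'a +
  fixes r :: "'a \<Rightarrow> nat"
  assumes rank_inj: "inj_on r (\<Union>j<3. set (Q j))"
    and no_X: "a \<in> (\<Union>j<3. set (Q j)) \<Longrightarrow> b \<in> (\<Union>j<3. set (Q j)) \<Longrightarrow>
      c \<in> (\<Union>j<3. set (Q j)) \<Longrightarrow> d \<in> (\<Union>j<3. set (Q j)) \<Longrightarrow>
      r a < r b \<Longrightarrow> r b < r c \<Longrightarrow> r c < r d \<Longrightarrow> E a c \<Longrightarrow> E b d \<Longrightarrow>
      E a b \<or> E a d \<or> E b c \<or> E c d"
begin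

lemma rank_eq_iff: "x \<in> vertices \<Longrightarrow> y \<in> vertices \<Longrightarrow> r x = r y \<longleftrightarrow> x = y"
  using rank_inj unfolding vertices_def inj_on_def by blast

definition inner_edge :: "'a \<Rightarrow> 'a \<Rightarrow> bool" where
  "inner_edge a b \<longleftrightarrow> (\<forall>u\<in>vertices. far u a b \<longrightarrow> between r a u b)"

definition outer_edge :: "'a \<Rightarrow> 'a \<Rightarrow> bool" where
  "outer_edge a b \<longleftrightarrow> (\<forall>u\<in>vertices. far u a b \<longrightarrow> \<not> between r a u b)"

text \<open>This is the only use of X-freeness: otherwise \<open>q a p b\<close> or \<open>a p b q\<close> induce an \<open>X\<close>.\<close>

lemma far_neighbour_stays_between:
  assumes V: "a \<in> vertices" "b \<in> vertices" "p \<in> vertices" "q \<in> vertices"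
    and "E a b" "E p q" "far p a b" "far q a b" "r a < r p" "r p < r b"
  shows "r a < r q \<and> r q < r b"
proof -
  have "\<not> E a p" "\<not> E p b" "\<not> E q a" "\<not> E q b" "\<not> E a q" "\<not> E b q" "E q p"
    using assms adj_commute unfolding far_def by blast+
  moreover have "r q \<noteq> r a" "r q \<noteq> r b"
    using assms rank_eq_iff unfolding far_def by blast+
  moreover have "\<not> (r q < r a)"
    using no_X[of q a p b] V assms calculation unfolding vertices_def by auto
  moreover have "\<not> (r b < r q)"
    using no_X[of a p b q] V assms calculation unfolding vertices_def by auto
  ultimately show ?thesis
    by auto
qed

lemma between_far_adjacent:
  assumes V: "a \<in> vertices" "b \<in> vertices" "p \<in> vertices" "q \<in> vertices"
    and "E a b" "E p q" "far p a b" "far q a b"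
  shows "between r a p b \<longleftrightarrow> between r a q b"
proof -
  have "E b a" "E q p" "far p b a" "far q b a"
    using assms adj_commute far_commute by blast+
  then show ?thesis
    using far_neighbour_stays_between[OF V(1-4)] far_neighbour_stays_between[OF V(1,2,4,3)]
      far_neighbour_stays_between[OF V(2,1,3,4)] far_neighbour_stays_between[OF V(2,1,4,3)] assms
    unfolding between_def by blast
qed

lemma between_along_far_segment:
  assumes ab: "a \<in> vertices" "b \<in> vertices" "E a b"
    and j: "j < 3" "lo \<le> hi" "hi \<le> len j"
    and far: "\<And>y. lo \<le> y \<Longrightarrow> y \<le> hi \<Longrightarrow> far (v j y) a b"
  shows "between r a (v j hi) b \<longleftrightarrow> between r a (v j lo) b"
  using j(2,3)
proof (induction hi rule: dec_induct)
  case (step n)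
  have "E (v j n) (v j (Suc n))"
    using j(1) step.prems by (simp add: adj_v_iff)
  then show ?case
    using between_far_adjacent[OF ab(1,2), of "v j (Suc n)" "v j n"] ab j(1) step far
    by (simp add: adj_commute)
qed simp

lemma edge_in_vertices:
  assumes "j < 3" "i < len j"
  shows "v j i \<in> vertices" "v j (Suc i) \<in> vertices" "E (v j i) (v j (Suc i))"
  using assms by (simp_all add: adj_v_iff)

text \<open>A vertex far from an edge at distance at least two from \<open>s\<close> reaches \<open>s\<close> through far
  vertices: along its own path, or, if it lies beyond the edge on the same path, through \<open>t\<close>
  and another path.\<close>

lemma between_far_iff_between_s:
  assumes j: "j < 3" "i < len j" "2 \<le> i" and u: "u \<in> vertices" "far u (v j i) (v j (Suc i))"
  shows "between r (v j i) u (v j (Suc i)) \<longleftrightarrow> between r (v j i) s (v j (Suc i))"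
proof -
  obtain j' x where x: "j' < 3" "x \<le> len j'" "u = v j' x"
    using u(1) vertices_iff by blast
  note ab = edge_in_vertices[OF j(1,2)]
  note far_iff = far_v_iff[OF j(1,2)]
  have far_x: "if x = 0 then 2 \<le> i else if x = len j' then i + 3 \<le> len j
      else if j' = j then x + 1 < i \<or> i + 2 < x
      else \<not> (x = 1 \<and> i = 0) \<and> \<not> (Suc x = len j' \<and> Suc i = len j)"
    using u(2) far_iff[OF x(1,2)] x(3) by simp
  show ?thesis
  proof (cases "j' = j \<and> Suc i < x")
    case True
    define jo where "jo = (if j = 0 then 1 else (0::nat))"
    have jo: "jo < 3" "jo \<noteq> j"
      unfolding jo_def by auto
    have "i + 3 \<le> len j"
      using True far_x x(2) by (auto split: if_splits)
    have "between r (v j i) (v j (len j)) (v j (Suc i)) \<longleftrightarrow>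
        between r (v j i) (v j x) (v j (Suc i))"
      by (rule between_along_far_segment[OF ab j(1)])
        (use True x far_x far_iff in \<open>auto split: if_splits\<close>)
    moreover have "between r (v j i) (v jo (len jo)) (v j (Suc i)) \<longleftrightarrow>
        between r (v j i) (v jo 0) (v j (Suc i))"
      by (rule between_along_far_segment[OF ab jo(1)])
        (use jo j \<open>i + 3 \<le> len j\<close> far_iff in \<open>auto split: if_splits\<close>)
    ultimately show ?thesis
      using True x(3) v_0[OF jo(1)] v_len[OF jo(1)] v_len[OF j(1)] by simp
  next
    case False
    have "between r (v j i) (v j' x) (v j (Suc i)) \<longleftrightarrow>
        between r (v j i) (v j' 0) (v j (Suc i))"
      by (rule between_along_far_segment[OF ab x(1)])
        (use False x far_x far_iff j in \<open>auto split: if_splits\<close>)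
    then show ?thesis
      using x(3) v_0[OF x(1)] by simp
  qed
qed

lemma between_far_iff_between_t:
  assumes j: "j < 3" "i \<le> 1" and u: "u \<in> vertices" "far u (v j i) (v j (Suc i))"
  shows "between r (v j i) u (v j (Suc i)) \<longleftrightarrow> between r (v j i) t (v j (Suc i))"
proof -
  obtain j' x where x: "j' < 3" "x \<le> len j'" "u = v j' x"
    using u(1) vertices_iff by blast
  have i: "i < len j"
    using j len_ge[OF j(1)] by simp
  note far_iff = far_v_iff[OF j(1) i]
  have "between r (v j i) (v j' (len j')) (v j (Suc i)) \<longleftrightarrow>
      between r (v j i) (v j' x) (v j (Suc i))"
    by (rule between_along_far_segment[OF edge_in_vertices[OF j(1) i] x(1)])
      (use x u(2) far_iff j len_ge[OF j(1)] len_ge[OF x(1)] in \<open>auto split: if_splits\<close>)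
  then show ?thesis
    using x(3) v_len[OF x(1)] by simp
qed

lemma inner_or_outer:
  assumes "j < 3" "i < len j"
  shows "inner_edge (v j i) (v j (Suc i)) \<or> outer_edge (v j i) (v j (Suc i))"
proof -
  define h where "h = (if 2 \<le> i then s else t)"
  have "between r (v j i) u (v j (Suc i)) \<longleftrightarrow> between r (v j i) h (v j (Suc i))"
    if "u \<in> vertices" "far u (v j i) (v j (Suc i))" for u
    using between_far_iff_between_s[OF assms _ that] between_far_iff_between_t[OF assms(1) _ that]
    unfolding h_def by auto
  then show ?thesis
    unfolding inner_edge_def outer_edge_def by blast
qed

lemma inner_edges_not_far:
  assumes "inner_edge a b" "inner_edge c d"
    and V: "a \<in> vertices" "b \<in> vertices" "c \<in> vertices" "d \<in> vertices"
    and "far c a b" "far d a b"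
  shows False
proof -
  have "far a c d" "far b c d"
    using assms adj_commute unfolding far_def by blast+
  then have "between r a c b" "between r a d b" "between r c a d" "between r c b d"
    using assms unfolding inner_edge_def by auto
  then show False
    unfolding between_def by linarith
qed

lemma inner_edges_same_end:
  assumes j: "j1 < 3" "j2 < 3" "j1 \<noteq> j2" "i1 < len j1" "i2 < len j2"
    and inner: "inner_edge (v j1 i1) (v j1 (Suc i1))" "inner_edge (v j2 i2) (v j2 (Suc i2))"
  shows "i1 \<le> 1 \<and> i2 \<le> 1 \<or> len j1 \<le> i1 + 2 \<and> len j2 \<le> i2 + 2"
proof (rule ccontr)
  assume "\<not> ?thesis"
  then have "far (v j2 i2) (v j1 i1) (v j1 (Suc i1))"
    "far (v j2 (Suc i2)) (v j1 i1) (v j1 (Suc i1))"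
    using j far_v_iff[OF j(1,4) j(2), of i2] far_v_iff[OF j(1,4) j(2), of "Suc i2"]
      len_ge[OF j(1)] len_ge[OF j(2)]
    by (auto split: if_splits)
  then show False
    using inner_edges_not_far[OF inner] edge_in_vertices j by blast
qed

lemma outer_segment_same_side:
  assumes j: "j < 3" "lo \<le> y" "y \<le> hi" "hi \<le> len j" and q: "q \<in> vertices"
    and outer: "\<And>i. lo \<le> i \<Longrightarrow> i < hi \<Longrightarrow>
      outer_edge (v j i) (v j (Suc i)) \<and> far q (v j i) (v j (Suc i))"
  shows "r (v j y) < r q \<longleftrightarrow> r (v j lo) < r q"
  using j(2,3)
proof (induction y rule: dec_induct)
  case (step n)
  have "\<not> between r (v j n) q (v j (Suc n))" "far q (v j n) (v j (Suc n))"
    using outer[of n] q step unfolding outer_edge_def by auto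
  moreover have "r q \<noteq> r (v j n)" "r q \<noteq> r (v j (Suc n))"
    using calculation(2) q j(1) step j(4) rank_eq_iff unfolding far_def by auto
  moreover have "r (v j n) < r q \<longleftrightarrow> r (v j lo) < r q"
    using step by simp
  ultimately show ?case
    unfolding between_def by auto
qed simp

lemma outer_path_same_side:
  assumes j: "j < 3" "y \<le> len j" and q: "q \<in> vertices"
    and outer: "\<And>i. i < len j \<Longrightarrow> outer_edge (v j i) (v j (Suc i))"
    and far: "\<And>i. i < len j \<Longrightarrow> far q (v j i) (v j (Suc i))"
  shows "r (v j y) < r q \<longleftrightarrow> r s < r q"
  using outer_segment_same_side[OF j(1) le0 j(2) order_refl q] outer far v_0[OF j(1)] by simp

lemma outer_path_end_edges:
  assumes j: "j < 3" and outer: "\<And>i. i < len j \<Longrightarrow> outer_edge (v j i) (v j (Suc i))"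
  shows "\<not> between r s t (v j 1)" "\<not> between r (v j 1) t (v j 2)"
    "\<not> between r (v j (len j - 2)) s (v j (len j - 1))" "\<not> between r (v j (len j - 1)) s t"
proof -
  have not_between: "\<not> between r (v j i) u (v j (Suc i))"
    if "i < len j" "u \<in> vertices" "far u (v j i) (v j (Suc i))" for i u
    using outer[of i] that unfolding outer_edge_def by blast
  note n = len_ge[OF j]
  show "\<not> between r s t (v j 1)"
    using not_between[of 0 t] far_t_iff[OF j, of 0] n v_0[OF j] by simp
  show "\<not> between r (v j 1) t (v j 2)"
    using not_between[of 1 t] far_t_iff[OF j, of 1] n by (simp add: numeral_2_eq_2)
  show "\<not> between r (v j (len j - 2)) s (v j (len j - 1))"
    using not_between[of "len j - 2" s] far_s_iff[OF j, of "len j - 2"] n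
    by (simp add: Suc_diff_Suc numeral_2_eq_2)
  show "\<not> between r (v j (len j - 1)) s t"
    using not_between[of "len j - 1" s] far_s_iff[OF j, of "len j - 1"] n v_len[OF j] by simp
qed

text \<open>Path \<open>j1\<close> lies on one side of \<open>w = v j2 2\<close>, while \<open>s\<close>, \<open>t\<close> and \<open>w\<close> lie on one side
  of \<open>v j1 2\<close> and of \<open>v j1 (n - 2)\<close>; the outer edges at both ends of path \<open>j1\<close> then
  cannot be arranged.\<close>

lemma two_outer_paths_impossible:
  assumes j: "j1 < 3" "j2 < 3" "j1 \<noteq> j2"
    and outer1: "\<And>i. i < len j1 \<Longrightarrow> outer_edge (v j1 i) (v j1 (Suc i))"
    and outer2: "\<And>i. i < len j2 \<Longrightarrow> outer_edge (v j2 i) (v j2 (Suc i))"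
  shows False
proof -
  define n where "n = len j1"
  have n: "4 \<le> n" "4 \<le> len j2"
    using len_ge j unfolding n_def by auto
  have side_w: "r (v j1 y) < r (v j2 2) \<longleftrightarrow> r s < r (v j2 2)" if "y \<le> n" for y
    using outer_path_same_side[OF j(1) that[unfolded n_def] _ outer1]
      far_other_path_iff[OF j(1) _ j(2) j(3)[symmetric], of _ 2] j(2) n
    by simp
  have side_x: "r (v j2 z) < r (v j1 y) \<longleftrightarrow> r s < r (v j1 y)"
    if "z \<le> len j2" "2 \<le> y" "y + 2 \<le> n" for y z
    using outer_path_same_side[OF j(2) that(1) _ outer2] far_other_path_iff[OF j(2) _ j(1) j(3), of _ y]
      j(1) that n unfolding n_def by simp
  have st: "s = v j1 0" "t = v j1 n" "t = v j2 (len j2)"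
    using v_0[OF j(1)] v_len[OF j(1)] v_len[OF j(2)] unfolding n_def by simp_all
  define S T X1 X2 XM XK W
    where "S = r s" and "T = r t" and "X1 = r (v j1 1)" and "X2 = r (v j1 2)"
      and "XM = r (v j1 (n - 2))" and "XK = r (v j1 (n - 1))" and "W = r (v j2 2)"
  note defs = S_def T_def X1_def X2_def XM_def XK_def W_def
  have W: "X1 < W \<longleftrightarrow> S < W" "X2 < W \<longleftrightarrow> S < W" "XM < W \<longleftrightarrow> S < W" "XK < W \<longleftrightarrow> S < W"
    "T < W \<longleftrightarrow> S < W"
    unfolding defs using side_w[of 1] side_w[of 2] side_w[of "n - 2"] side_w[of "n - 1"] side_w[of n] st n
    by simp_all
  have X: "W < X2 \<longleftrightarrow> S < X2" "T < X2 \<longleftrightarrow> S < X2" "W < XM \<longleftrightarrow> S < XM" "T < XM \<longleftrightarrow> S < XM"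
    unfolding defs using side_x[where y = 2 and z = 2] side_x[where y = 2 and z = "len j2"]
      side_x[where y = "n - 2" and z = 2] side_x[where y = "n - 2" and z = "len j2"] st n
    by simp_all
  have ne: "X1 \<noteq> T" "XK \<noteq> S" "S \<noteq> T" "W \<noteq> S" "W \<noteq> T" "W \<noteq> X1" "W \<noteq> X2" "W \<noteq> XM" "W \<noteq> XK"
    "X2 \<noteq> S" "X2 \<noteq> T" "XM \<noteq> S" "XM \<noteq> T"
    unfolding defs st(1,2) using j n unfolding n_def by (simp_all add: rank_eq_iff v_eq_iff)
  have o: "\<not> (S < T \<and> T < X1 \<or> X1 < T \<and> T < S)" "\<not> (X1 < T \<and> T < X2 \<or> X2 < T \<and> T < X1)"
    "\<not> (XM < S \<and> S < XK \<or> XK < S \<and> S < XM)" "\<not> (XK < S \<and> S < T \<or> T < S \<and> S < XK)"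
    using outer_path_end_edges[OF j(1) outer1] unfolding defs n_def between_def by blast+
  show False
  proof (cases "S < W")
    case True
    then have "X2 < S" "X2 < T" "XM < S" "XM < T"
      using W X ne by auto
    then have "X1 < T"
      using o(2) ne(1) by arith
    then have "S < T"
      using o(1) ne(3) by arith
    then have "S < XK"
      using o(4) ne(2) by arith
    then show False
      using o(3) \<open>XM < S\<close> by auto
  next
    case False
    then have "S < X2" "T < X2" "S < XM" "T < XM"
      using W X ne by auto
    then have "T < X1"
      using o(2) ne(1) by arith
    then have "T < S"
      using o(1) ne(3) by arith
    then have "XK < S"
      using o(4) ne(2) by arith
    then show False
      using o(3) \<open>S < XM\<close> by auto
  qed
qed

lemma outer_away_from_s_impossible:
  assumes outer: "\<And>j i. j < 3 \<Longrightarrow> 2 \<le> i \<Longrightarrow> i < len j \<Longrightarrow> outer_edge (v j i) (v j (Suc i))"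
  shows False
proof -
  have not_between: "\<not> between r (v j1 2) (v j2 2) t" if j: "j1 < 3" "j2 < 3" "j1 \<noteq> j2" for j1 j2
  proof -
    have "4 \<le> len j1" "4 \<le> len j2"
      using len_ge j by auto
    then have "r (v j1 (len j1)) < r (v j2 2) \<longleftrightarrow> r (v j1 2) < r (v j2 2)"
      using outer_segment_same_side[OF j(1), of 2 "len j1" "len j1" "v j2 2"] outer[OF j(1)]
        far_other_path_iff[OF j(1) _ j(2) j(3)[symmetric], of _ 2] j(2)
      by auto
    then show ?thesis
      using v_len[OF j(1)] unfolding between_def by auto
  qed
  have "\<exists>j1<3. \<exists>j2<3. j1 \<noteq> j2 \<and> between r (v j2 2) (v j1 2) t"
  proof (rule between_among_three[where f = "\<lambda>j. v j 2"])
    fix j j' :: nat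
    assume "j < 3" "j' < 3" "j \<noteq> j'"
    then show "r (v j 2) \<noteq> r (v j' 2)"
      using len_ge[of j] len_ge[of j'] by (simp add: rank_eq_iff v_eq_iff)
  next
    fix j :: nat
    assume "j < 3"
    then show "r (v j 2) \<noteq> r t"
      using len_ge[of j] by (simp add: rank_eq_iff v_eq_t_iff)
  qed
  then show False
    using not_between by blast
qed

lemma inner_edges_near_s_impossible:
  assumes j: "j1 < 3" "j2 < 3" "j1 \<noteq> j2" "i1 \<le> 1" "i2 \<le> 1"
    and inner: "inner_edge (v j1 i1) (v j1 (Suc i1))" "inner_edge (v j2 i2) (v j2 (Suc i2))"
  shows False
proof (rule outer_away_from_s_impossible)
  fix j i
  assume ji: "j < 3" "2 \<le> i" "i < len j"
  have "\<not> inner_edge (v j i) (v j (Suc i))"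
    if "j' < 3" "j' \<noteq> j" "i' \<le> 1" "inner_edge (v j' i') (v j' (Suc i'))" for j' i'
    using inner_edges_same_end[OF that(1) ji(1) that(2), of i' i] that ji len_ge[OF that(1)] by auto
  then show "outer_edge (v j i) (v j (Suc i))"
    using inner_or_outer[OF ji(1,3)] j inner by (cases "j = j1") auto
qed


lemma X_free_theta_rev: "X_free_theta E (\<lambda>j. rev (Q j)) t s r"
proof unfold_locales
  fix j j' :: nat
  assume "j < 3"
  then show "distinct (rev (Q j))" "5 \<le> length (rev (Q j))"
    "hd (rev (Q j)) = t" "last (rev (Q j)) = s"
    using distinct_path long_path last_path hd_path by (simp_all add: hd_rev last_rev)
  assume "j' < 3" "j \<noteq> j'"
  then show "set (rev (Q j)) \<inter> set (rev (Q j')) \<subseteq> {t, s}"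
    using paths_meet_at_ends[OF \<open>j < 3\<close>] by auto
qed (use induced rank_inj no_X in simp_all)

lemma inner_edges_near_t_impossible:
  assumes j: "j1 < 3" "j2 < 3" "j1 \<noteq> j2" "i1 < len j1" "i2 < len j2"
    and near_t: "len j1 \<le> i1 + 2" "len j2 \<le> i2 + 2"
    and inner: "inner_edge (v j1 i1) (v j1 (Suc i1))" "inner_edge (v j2 i2) (v j2 (Suc i2))"
  shows False
proof -
  interpret rev: X_free_theta E "\<lambda>j. rev (Q j)" t s r
    by (rule X_free_theta_rev)
  have rev_v: "rev.v j k = v j (len j - k)" if "j < 3" "k \<le> len j" for j k
    using that length_path[OF that(1)] by (simp add: rev.v_def v_def rev_nth Suc_diff_le)
  have "rev.vertices = vertices"
    by (simp add: rev.vertices_def vertices_def)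
  then have rev_inner: "rev.inner_edge a b \<longleftrightarrow> inner_edge b a" for a b
    by (simp add: rev.inner_edge_def inner_edge_def far_commute between_commute)
  have rev_inner_edge: "rev.inner_edge (rev.v j (len j - Suc i)) (rev.v j (Suc (len j - Suc i)))"
    if "j < 3" "i < len j" "inner_edge (v j i) (v j (Suc i))" for j i
    using that by (simp add: rev_v rev_inner Suc_diff_Suc)
  have "len j1 - Suc i1 \<le> 1" "len j2 - Suc i2 \<le> 1"
    using near_t by auto
  then show False
    using rev.inner_edges_near_s_impossible[OF j(1-3)] rev_inner_edge j inner by blast
qed

lemma two_paths_with_inner_edges:
  obtains j1 j2 i1 i2 where "j1 < 3" "j2 < 3" "j1 \<noteq> j2" "i1 < len j1" "i2 < len j2"
    "inner_edge (v j1 i1) (v j1 (Suc i1))" "inner_edge (v j2 i2) (v j2 (Suc i2))"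
proof -
  let ?has_inner = "\<lambda>j. \<exists>i<len j. inner_edge (v j i) (v j (Suc i))"
  have one_of_two: "?has_inner j \<or> ?has_inner j'" if "j < 3" "j' < 3" "j \<noteq> j'" for j j'
    using two_outer_paths_impossible[OF that] inner_or_outer that by blast
  have "?has_inner 0 \<or> ?has_inner 1" "?has_inner 0 \<or> ?has_inner 2" "?has_inner 1 \<or> ?has_inner 2"
    using one_of_two by simp_all
  then have "?has_inner 0 \<and> ?has_inner 1 \<or> ?has_inner 0 \<and> ?has_inner 2 \<or>
      ?has_inner 1 \<and> ?has_inner 2"
    by blast
  then show thesis
  proof (elim disjE conjE)
    show "?has_inner 0 \<Longrightarrow> ?has_inner 1 \<Longrightarrow> thesis" using that[of 0 1] by auto
    show "?has_inner 0 \<Longrightarrow> ?has_inner 2 \<Longrightarrow> thesis" using that[of 0 2] by auto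
    show "?has_inner 1 \<Longrightarrow> ?has_inner 2 \<Longrightarrow> thesis" using that[of 1 2] by auto
  qed
qed

theorem inconsistent: False
proof -
  obtain j1 j2 i1 i2 where j: "j1 < 3" "j2 < 3" "j1 \<noteq> j2" "i1 < len j1" "i2 < len j2"
    and inner: "inner_edge (v j1 i1) (v j1 (Suc i1))" "inner_edge (v j2 i2) (v j2 (Suc i2))"
    by (rule two_paths_with_inner_edges)
  then consider "i1 \<le> 1" "i2 \<le> 1" | "len j1 \<le> i1 + 2" "len j2 \<le> i2 + 2"
    using inner_edges_same_end by blast
  then show False
    using inner_edges_near_s_impossible[OF j(1-3) _ _ inner]
      inner_edges_near_t_impossible[OF j _ _ inner] by cases blast+
qed

end

definition order_rank :: "('a \<Rightarrow> 'a \<Rightarrow> bool) \<Rightarrow> 'a set \<Rightarrow> 'a \<Rightarrow> nat" where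
  "order_rank lt V x = card {y \<in> V. lt y x}"

lemma order_rank_less_iff:
  assumes "finite V" and irrefl: "\<forall>x\<in>V. \<not> lt x x"
    and trans: "\<forall>x\<in>V. \<forall>y\<in>V. \<forall>z\<in>V. lt x y \<longrightarrow> lt y z \<longrightarrow> lt x z"
    and total: "\<forall>x\<in>V. \<forall>y\<in>V. x \<noteq> y \<longrightarrow> lt x y \<or> lt y x"
    and "x \<in> V" "y \<in> V"
  shows "order_rank lt V x < order_rank lt V y \<longleftrightarrow> lt x y"
proof -
  have mono: "order_rank lt V x < order_rank lt V y" if "x \<in> V" "y \<in> V" "lt x y" for x y
  proof -
    have "{z \<in> V. lt z x} \<subset> {z \<in> V. lt z y}"
      using that irrefl trans by blast
    then show ?thesis
      unfolding order_rank_def using \<open>finite V\<close> by (simp add: psubset_card_mono)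
  qed
  show ?thesis
    using mono[of x y] mono[of y x] total irrefl assms(5,6) by (metis less_asym less_irrefl)
qed

lemma order_rank_inj:
  assumes "finite V" "\<forall>x\<in>V. \<not> lt x x"
    "\<forall>x\<in>V. \<forall>y\<in>V. \<forall>z\<in>V. lt x y \<longrightarrow> lt y z \<longrightarrow> lt x z"
    "\<forall>x\<in>V. \<forall>y\<in>V. x \<noteq> y \<longrightarrow> lt x y \<or> lt y x"
  shows "inj_on (order_rank lt V) V"
proof (rule inj_onI, rule ccontr)
  fix x y
  assume "x \<in> V" "y \<in> V" "order_rank lt V x = order_rank lt V y" "x \<noteq> y"
  then show False
    using order_rank_less_iff[OF assms] assms(4) by (metis less_irrefl)
qed

definition B4_path :: "nat \<Rightarrow> nat list" where
  "B4_path j = [[0, 2, 3, 4, 1], [0, 5, 6, 7, 1], [0, 8, 9, 10, 1]] ! j"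

lemma B4_path_props:
  assumes "j < 3"
  shows "distinct (B4_path j)" "length (B4_path j) = 5" "hd (B4_path j) = 0" "last (B4_path j) = 1"
    "set (B4_path j) \<subseteq> B4_vertices" "set (zip (B4_path j) (tl (B4_path j))) \<subseteq> B4_edges"
proof -
  have "j = 0 \<or> j = 1 \<or> j = 2"
    using assms by auto
  then show "distinct (B4_path j)" "length (B4_path j) = 5" "hd (B4_path j) = 0" "last (B4_path j) = 1"
    "set (B4_path j) \<subseteq> B4_vertices" "set (zip (B4_path j) (tl (B4_path j))) \<subseteq> B4_edges"
    by (elim disjE; simp add: B4_path_def B4_vertices_def B4_edges_def)+
qed

lemma B4_paths_meet:
  assumes "j < 3" "j' < 3" "j \<noteq> j'"
  shows "set (B4_path j) \<inter> set (B4_path j') = {0, 1}"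
    "set (zip (B4_path j) (tl (B4_path j))) \<inter> set (zip (B4_path j') (tl (B4_path j'))) = {}"
proof -
  have "j = 0 \<or> j = 1 \<or> j = 2" "j' = 0 \<or> j' = 1 \<or> j' = 2"
    using assms by auto
  then show "set (B4_path j) \<inter> set (B4_path j') = {0, 1}"
    "set (zip (B4_path j) (tl (B4_path j))) \<inter> set (zip (B4_path j') (tl (B4_path j'))) = {}"
    using assms(3) by (elim disjE; simp add: B4_path_def)+
qed

lemma B4_edges_eq: "B4_edges = (\<Union>j<3. set (zip (B4_path j) (tl (B4_path j))))"
proof -
  have "{..<3::nat} = {0, 1, 2}"
    by auto
  then show ?thesis
    unfolding B4_edges_def B4_path_def by auto
qed

lemma induced_B4_subdivision_theta:
  assumes "induced_subdivision V E B4_vertices B4_edges"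
  obtains Q s t where "induced_theta E Q s t" "(\<Union>j<3. set (Q j)) \<subseteq> V"
proof -
  obtain phi :: "nat \<Rightarrow> 'a" and P where inj: "inj_on phi B4_vertices" and img: "phi ` B4_vertices \<subseteq> V"
    and paths: "\<forall>e\<in>B4_edges. distinct (P e) \<and> length (P e) \<ge> 2 \<and> set (P e) \<subseteq> V \<and>
      hd (P e) = phi (fst e) \<and> last (P e) = phi (snd e) \<and>
      (\<forall>i. Suc i < length (P e) \<longrightarrow> E (P e ! i) (P e ! Suc i)) \<and>
      internal_vertices (P e) \<inter> phi ` B4_vertices = {}"
    and disjoint: "\<forall>e\<in>B4_edges. \<forall>e'\<in>B4_edges. e \<noteq> e' \<longrightarrow>
      internal_vertices (P e) \<inter> internal_vertices (P e') = {}"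
    and induced: "let S = phi ` B4_vertices \<union> (\<Union>e\<in>B4_edges. set (P e)) in
      \<forall>x\<in>S. \<forall>y\<in>S. E x y \<longleftrightarrow> (\<exists>e\<in>B4_edges. path_adj (P e) x y)"
    using assms unfolding induced_subdivision_def by (elim exE conjE) (rule that; assumption)
  interpret subdivision_paths phi P B4_vertices B4_edges
    using inj paths disjoint by unfold_locales auto
  define Q where "Q j = subdivided_path phi P (B4_path j)" for j
  note path = B4_path_props
  define S where "S = phi ` B4_vertices \<union> (\<Union>e\<in>B4_edges. set (P e))"
  have set_Q: "set (Q j) \<subseteq> S" if "j < 3" for j
    unfolding S_def Q_def set_subdivided_path[OF path(6)[OF that]]
    by (rule Un_mono[OF image_mono[OF path(5)[OF that]] UN_mono[OF path(6)[OF that] internal_vertices_subset]])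
  have "induced_theta E Q (phi 0) (phi 1)"
  proof
    fix j j' :: nat
    assume j: "j < 3"
    show "distinct (Q j)"
      unfolding Q_def using distinct_subdivided_path path j by blast
    show "5 \<le> length (Q j)"
      unfolding Q_def using length_subdivided_path path j by metis
    have "B4_path j \<noteq> []"
      using path(2)[OF j] by auto
    then show "hd (Q j) = phi 0" "last (Q j) = phi 1"
      using subdivided_path_ends[OF _ path(6)[OF j]] path(3,4)[OF j] unfolding Q_def by simp_all
    assume j': "j' < 3" "j \<noteq> j'"
    show "set (Q j) \<inter> set (Q j') \<subseteq> {phi 0, phi 1}"
      using subdivided_paths_inter[OF path(5)[OF j] path(5)[OF j'(1)] path(6)[OF j] path(6)[OF j'(1)]
          B4_paths_meet(2)[OF j j']] B4_paths_meet(1)[OF j j']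
      unfolding Q_def by simp
  next
    fix x y
    assume "x \<in> (\<Union>j<3. set (Q j))" "y \<in> (\<Union>j<3. set (Q j))"
    then have "x \<in> S" "y \<in> S"
      using set_Q by blast+
    then have "E x y \<longleftrightarrow> (\<exists>e\<in>B4_edges. path_adj (P e) x y)"
      using induced unfolding Let_def S_def[symmetric] by simp
    also have "\<dots> \<longleftrightarrow> (\<exists>j<3. \<exists>e\<in>set (zip (B4_path j) (tl (B4_path j))). path_adj (P e) x y)"
      unfolding B4_edges_eq by blast
    also have "\<dots> \<longleftrightarrow> (\<exists>j<3. path_adj (Q j) x y)"
      using path_adj_subdivided_path[OF path(6)] unfolding Q_def by (simp cong: conj_cong)
    finally show "E x y \<longleftrightarrow> (\<exists>j<3. path_adj (Q j) x y)" .
  qed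
  moreover have "set (P e) \<subseteq> V" if "e \<in> B4_edges" for e
    using paths that by simp
  then have "S \<subseteq> V"
    unfolding S_def using img by blast
  then have "(\<Union>j<3. set (Q j)) \<subseteq> V"
    using set_Q by blast
  ultimately show thesis
    by (rule that)
qed

lemma X_free_theta_order_rank:
  assumes "ordered_graph V E lt" "X_free V E lt"
    and "induced_theta E Q s t" "(\<Union>j<3. set (Q j)) \<subseteq> V"
  shows "X_free_theta E Q s t (order_rank lt V)"
proof -
  have order: "finite V" "\<forall>x\<in>V. \<not> lt x x"
    "\<forall>x\<in>V. \<forall>y\<in>V. \<forall>z\<in>V. lt x y \<longrightarrow> lt y z \<longrightarrow> lt x z"
    "\<forall>x\<in>V. \<forall>y\<in>V. x \<noteq> y \<longrightarrow> lt x y \<or> lt y x"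
    using assms(1) unfolding ordered_graph_def by blast+
  show ?thesis
  proof (intro X_free_theta.intro[OF assms(3)] X_free_theta_axioms.intro)
    show "inj_on (order_rank lt V) (\<Union>j<3. set (Q j))"
      using inj_on_subset[OF order_rank_inj[OF order] assms(4)] .
    fix a b c d
    assume "a \<in> (\<Union>j<3. set (Q j))" "b \<in> (\<Union>j<3. set (Q j))" "c \<in> (\<Union>j<3. set (Q j))"
      "d \<in> (\<Union>j<3. set (Q j))"
      and ranks: "order_rank lt V a < order_rank lt V b" "order_rank lt V b < order_rank lt V c"
        "order_rank lt V c < order_rank lt V d"
      and edges: "E a c" "E b d"
    then have V: "a \<in> V" "b \<in> V" "c \<in> V" "d \<in> V"
      using assms(4) by blast+
    then have "lt a b" "lt b c" "lt c d"
      using ranks order_rank_less_iff[OF order] by blast+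
    then show "E a b \<or> E a d \<or> E b c \<or> E c d"
      using assms(2) V edges unfolding X_free_def by blast
  qed
qed

theorem proposition6p2:
  fixes V :: "'a set" and E :: "'a \<Rightarrow> 'a \<Rightarrow> bool" and lt :: "'a \<Rightarrow> 'a \<Rightarrow> bool"
  assumes "ordered_graph V E lt"
    and "X_free V E lt"
  shows "\<not> induced_subdivision V E B4_vertices B4_edges"
proof
  assume "induced_subdivision V E B4_vertices B4_edges"
  then obtain Q s t where "induced_theta E Q s t" "(\<Union>j<3. set (Q j)) \<subseteq> V"
    by (rule induced_B4_subdivision_theta)
  with assms have "X_free_theta E Q s t (order_rank lt V)"
    by (rule X_free_theta_order_rank)
  then show False
    by (rule X_free_theta.inconsistent)
qed

end
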